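(* Let $G$ be a directed graph with real edge weights and no cycle of negative or zero weight. For any vertices $v,w$ such that $w$ is reachable from $v$, there exist two shortest paths from $v$ to $w$ in $G$ whose common vertices are all $(v,w)$-distance-critical vertices.
   Context: $\mathrm{dist}(x,y,H)$ denotes the shortest-path distance from $x$ to $y$ in graph $H$. A vertex $u$ is $(v,w)$-distance-critical if $u\in\{v,w\}$ or $\mathrm{dist}(v,w,G\setminus\{u\})>\mathrm{dist}(v,w,G)$. *)

theory Defs
  imports "HOL-Library.Extended_Real"
begin

definition is_walk :: "'a set \<Rightarrow> ('a \<times> 'a) set \<Rightarrow> 'a list \<Rightarrow> bool" where
  "is_walk V E xs \<longleftrightarrow> xs \<noteq> [] \<and> set xs \<subseteq> V \<and>
     (\<forall>i. Suc i < length xs \<longrightarrow> (xs ! i, xs ! Suc i) \<in> E)"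

definition walk_weight :: "('a \<times> 'a \<Rightarrow> real) \<Rightarrow> 'a list \<Rightarrow> real" where
  "walk_weight c xs = (\<Sum>i<length xs - 1. c (xs ! i, xs ! Suc i))"

definition is_path :: "'a set \<Rightarrow> ('a \<times> 'a) set \<Rightarrow> 'a \<Rightarrow> 'a \<Rightarrow> 'a list \<Rightarrow> bool" where
  "is_path V E v w xs \<longleftrightarrow> is_walk V E xs \<and> distinct xs \<and> hd xs = v \<and> last xs = w"

text \<open>Simple directed cycles: closed walk ys @ [hd ys] with ys nonempty and distinct
  (a self-loop is a cycle of length one).\<close>
definition is_cycle :: "'a set \<Rightarrow> ('a \<times> 'a) set \<Rightarrow> 'a list \<Rightarrow> bool" where
  "is_cycle V E xs \<longleftrightarrow> (\<exists>ys. ys \<noteq> [] \<and> distinct ys \<and> xs = ys @ [hd ys]) \<and> is_walk V E xs"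

definition reachable :: "'a set \<Rightarrow> ('a \<times> 'a) set \<Rightarrow> 'a \<Rightarrow> 'a \<Rightarrow> bool" where
  "reachable V E v w \<longleftrightarrow> (\<exists>xs. is_walk V E xs \<and> hd xs = v \<and> last xs = w)"

text \<open>Shortest-path distance dist(v,w,H), with value \<infinity> if w is unreachable from v.\<close>
definition dist :: "'a set \<Rightarrow> ('a \<times> 'a) set \<Rightarrow> ('a \<times> 'a \<Rightarrow> real) \<Rightarrow> 'a \<Rightarrow> 'a \<Rightarrow> ereal" where
  "dist V E c v w = (INF xs \<in> {xs. is_path V E v w xs}. ereal (walk_weight c xs))"

definition is_shortest_path ::
  "'a set \<Rightarrow> ('a \<times> 'a) set \<Rightarrow> ('a \<times> 'a \<Rightarrow> real) \<Rightarrow> 'a \<Rightarrow> 'a \<Rightarrow> 'a list \<Rightarrow> bool" where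
  "is_shortest_path V E c v w xs \<longleftrightarrow>
     is_path V E v w xs \<and> ereal (walk_weight c xs) = dist V E c v w"

text \<open>G \ {u} has vertex set V - {u}; edges at u become unusable since walks must stay in the vertex set.\<close>
definition distance_critical ::
  "'a set \<Rightarrow> ('a \<times> 'a) set \<Rightarrow> ('a \<times> 'a \<Rightarrow> real) \<Rightarrow> 'a \<Rightarrow> 'a \<Rightarrow> 'a \<Rightarrow> bool" where
  "distance_critical V E c v w u \<longleftrightarrow>
     u \<in> {v, w} \<or> dist (V - {u}) E c v w > dist V E c v w"

end

theory Submission
  imports Defs
begin

(* Since every cycle has positive weight, distances from v are attained by paths, and the tight
   edges (x, y), those with dist(v, y) = dist(v, x) + c(x, y), form an acyclic digraph D whose
   walks from v to w are exactly the shortest v-w paths of G. A vertex on all of them is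
   distance-critical: every v-w path avoiding it is longer. So it suffices to find two v-w walks
   in D meeting only in dominators of w (vertices on every v-w walk of D).
   For arbitrary reachable a, b this is proved by induction on h(a) + h(b), h being the length
   of a longest walk from the root. If h(a) <= h(b) and b is not the root, choose a parent p of b
   such that every common dominator of a and p dominates all parents of b, hence b; such a p
   exists since the dominators of a form a chain. Then extend the pair obtained for (a, p) by
   the edge p -> b. *)

section \<open>Walks\<close>

lemma is_walk_iff_successively:
  "is_walk V E xs \<longleftrightarrow> xs \<noteq> [] \<and> set xs \<subseteq> V \<and> successively (\<lambda>x y. (x, y) \<in> E) xs"
  by (simp add: is_walk_def successively_conv_nth)

lemma is_walk_singleton [simp]: "is_walk V E [x] \<longleftrightarrow> x \<in> V"
  by (simp add: is_walk_iff_successively)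

lemma is_walk_Cons_Cons [simp]:
  "is_walk V E (x # y # xs) \<longleftrightarrow> x \<in> V \<and> (x, y) \<in> E \<and> is_walk V E (y # xs)"
  by (auto simp: is_walk_iff_successively)

lemma is_walk_append:
  assumes "xs \<noteq> []" "ys \<noteq> []"
  shows "is_walk V E (xs @ ys) \<longleftrightarrow> is_walk V E xs \<and> is_walk V E ys \<and> (last xs, hd ys) \<in> E"
  using assms by (auto simp: is_walk_iff_successively successively_append_iff)

lemma is_walk_ConsD: "is_walk V E (x # xs) \<Longrightarrow> x \<in> V"
  by (simp add: is_walk_def)

lemma is_walk_append_overlap:
  "is_walk V E (xs @ y # ys) \<longleftrightarrow> is_walk V E (xs @ [y]) \<and> is_walk V E (y # ys)"
  using is_walk_append[of xs "y # ys"] is_walk_append[of xs "[y]"]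
  by (cases "xs = []") (auto dest: is_walk_ConsD)

lemma is_walk_mono: "is_walk V E xs \<Longrightarrow> V \<subseteq> V' \<Longrightarrow> E \<subseteq> E' \<Longrightarrow> is_walk V' E' xs"
  unfolding is_walk_def by blast

lemma is_walk_take_drop:
  assumes "is_walk V E xs" "i < length xs"
  shows "is_walk V E (take (Suc i) xs)" "is_walk V E (drop i xs)"
proof -
  have "xs = take i xs @ xs ! i # drop (Suc i) xs"
    using assms(2) by (rule id_take_nth_drop)
  then have "is_walk V E (take i xs @ [xs ! i]) \<and> is_walk V E (xs ! i # drop (Suc i) xs)"
    using assms(1) is_walk_append_overlap by metis
  then show "is_walk V E (take (Suc i) xs)" "is_walk V E (drop i xs)"
    using assms(2) by (simp_all add: take_Suc_conv_app_nth Cons_nth_drop_Suc)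
qed

lemma walk_weight_singleton [simp]: "walk_weight c [x] = 0"
  by (simp add: walk_weight_def)

lemma walk_weight_Cons_Cons [simp]:
  "walk_weight c (x # y # xs) = c (x, y) + walk_weight c (y # xs)"
  unfolding walk_weight_def by (simp only: length_Cons diff_Suc_1 sum.lessThan_Suc_shift) simp

lemma walk_weight_append_overlap:
  "walk_weight c (xs @ y # ys) = walk_weight c (xs @ [y]) + walk_weight c (y # ys)"
  by (induction xs rule: induct_list012) simp_all

lemma is_walk_remove_loop:
  assumes "is_walk V E (as @ z # ms @ z # cs)"
  shows "is_walk V E (as @ z # cs)" "is_walk V E (z # ms @ [z])"
  using assms is_walk_append_overlap[of V E as z "ms @ z # cs"]
    is_walk_append_overlap[of V E "z # ms" z cs] is_walk_append_overlap[of V E as z cs]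
  by simp_all

lemma walk_weight_remove_loop:
  "walk_weight c (as @ z # ms @ z # cs) = walk_weight c (as @ z # cs) + walk_weight c (z # ms @ [z])"
  using walk_weight_append_overlap[of c as z "ms @ z # cs"]
    walk_weight_append_overlap[of c "z # ms" z cs] walk_weight_append_overlap[of c as z cs]
  by simp

lemma dist_unreachable: "\<not> reachable V E a b \<Longrightarrow> dist V E c a b = \<infinity>"
proof -
  assume "\<not> reachable V E a b"
  then have "{xs. is_path V E a b xs} = {}"
    unfolding reachable_def is_path_def by blast
  then show ?thesis
    unfolding dist_def by (simp only: INF_empty top_ereal_def)
qed

section \<open>Shortest paths when all cycles have positive weight\<close>

locale pos_cycle_graph =
  fixes V :: "'a set" and E :: "('a \<times> 'a) set" and c :: "'a \<times> 'a \<Rightarrow> real"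
  assumes finite_vertices: "finite V"
    and cycle_weight_pos: "\<And>C. is_cycle V E C \<Longrightarrow> walk_weight c C > 0"
begin

lemma closed_walk_weight_pos:
  assumes "is_walk V E xs" "length xs \<ge> 2" "hd xs = last xs"
  shows "walk_weight c xs > 0"
  using assms
proof (induction "length xs" arbitrary: xs rule: less_induct)
  case less
  obtain ys l where xs_eq: "xs = ys @ [l]"
    using less.prems(2) by (cases xs rule: rev_cases) auto
  have "ys \<noteq> []"
    using less.prems(2) xs_eq by auto
  have "hd ys = l"
    using less.prems(3) xs_eq \<open>ys \<noteq> []\<close> by simp
  show ?case
  proof (cases "distinct ys")
    case True
    then have "is_cycle V E xs"
      unfolding is_cycle_def using \<open>ys \<noteq> []\<close> \<open>hd ys = l\<close> xs_eq less.prems(1) by auto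
    then show ?thesis by (rule cycle_weight_pos)
  next
    case False
    then obtain as z ms cs where "ys = as @ z # ms @ z # cs"
      using not_distinct_decomp by fastforce
    then have split: "xs = as @ z # ms @ z # (cs @ [l])"
      using xs_eq by simp
    let ?loop = "z # ms @ [z]" and ?rest = "as @ z # cs @ [l]"
    have walks: "is_walk V E ?rest" "is_walk V E ?loop"
      using is_walk_remove_loop[of V E as z ms "cs @ [l]"] less.prems(1) split by simp_all
    have "hd ?rest = hd xs"
      using split by (cases as) auto
    then have "hd ?rest = last ?rest"
      using less.prems(3) xs_eq by simp
    moreover have "length xs = length as + length ms + length cs + 3"
      using split by simp
    ultimately have "walk_weight c ?rest > 0" "walk_weight c ?loop > 0"
      using less.hyps walks by auto
    moreover have "walk_weight c xs = walk_weight c ?rest + walk_weight c ?loop"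
      using walk_weight_remove_loop[of c as z ms "cs @ [l]"] split by simp
    ultimately show ?thesis by simp
  qed
qed

lemma walk_shortcut:
  "is_walk V E xs \<Longrightarrow> \<exists>ys. is_path V E (hd xs) (last xs) ys \<and> walk_weight c ys \<le> walk_weight c xs"
proof (induction "length xs" arbitrary: xs rule: less_induct)
  case less
  show ?case
  proof (cases "distinct xs")
    case True
    then show ?thesis using less.prems unfolding is_path_def by blast
  next
    case False
    then obtain as z ms cs where split: "xs = as @ z # ms @ z # cs"
      using not_distinct_decomp by fastforce
    let ?rest = "as @ z # cs"
    have walks: "is_walk V E ?rest" "is_walk V E (z # ms @ [z])"
      using is_walk_remove_loop[of V E as z ms cs] less.prems split by simp_all
    have "walk_weight c (z # ms @ [z]) > 0"
      using closed_walk_weight_pos[OF walks(2)] by simp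
    moreover have "walk_weight c xs = walk_weight c ?rest + walk_weight c (z # ms @ [z])"
      unfolding split by (rule walk_weight_remove_loop)
    ultimately have "walk_weight c ?rest < walk_weight c xs"
      by simp
    moreover have "hd ?rest = hd xs"
      using split by (cases as) auto
    moreover have "last ?rest = last xs"
      using split by (cases cs) auto
    moreover have "length ?rest < length xs"
      using split by simp
    ultimately obtain ys where "is_path V E (hd xs) (last xs) ys" "walk_weight c ys \<le> walk_weight c ?rest"
      using less.hyps[of ?rest] walks(1) by auto
    with \<open>walk_weight c ?rest < walk_weight c xs\<close> show ?thesis
      by force
  qed
qed

lemma finite_paths: "finite {P. is_path V E a b P}"
  by (rule finite_subset[OF _ finite_subset_distinct[OF finite_vertices]])
    (auto simp: is_path_def is_walk_def)

lemma dist_le_walk_weight: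
  assumes "is_walk V E xs"
  shows "dist V E c (hd xs) (last xs) \<le> ereal (walk_weight c xs)"
proof -
  obtain ys where "is_path V E (hd xs) (last xs) ys" "walk_weight c ys \<le> walk_weight c xs"
    using walk_shortcut[OF assms] by blast
  then show ?thesis
    unfolding dist_def by (meson INF_lower2 CollectI ereal_less_eq(3))
qed

lemma exists_shortest_path:
  assumes "reachable V E a b"
  shows "\<exists>P. is_shortest_path V E c a b P"
proof -
  let ?S = "{P. is_path V E a b P}"
  have nonempty: "?S \<noteq> {}"
    using assms walk_shortcut unfolding reachable_def by fastforce
  define P where "P = arg_min_on (walk_weight c) ?S"
  have P: "P \<in> ?S"
    unfolding P_def using finite_paths nonempty by (rule arg_min_if_finite(1))
  have P_min: "walk_weight c P \<le> walk_weight c Q" if "Q \<in> ?S" for Q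
    unfolding P_def using finite_paths nonempty that by (rule arg_min_least)
  have "dist V E c a b = ereal (walk_weight c P)"
    unfolding dist_def by (rule antisym) (use P P_min in \<open>auto intro: INF_lower INF_greatest\<close>)
  then show ?thesis
    using P unfolding is_shortest_path_def by auto
qed

lemma dist_triangle_walk:
  assumes "is_walk V E (y # ys)"
  shows "dist V E c v (last (y # ys)) \<le> dist V E c v y + ereal (walk_weight c (y # ys))"
proof (cases "reachable V E v y")
  case False
  then show ?thesis by (simp add: dist_unreachable)
next
  case True
  then obtain S where S: "is_shortest_path V E c v y S"
    using exists_shortest_path by blast
  then obtain B where S_eq: "S = B @ [y]"
    unfolding is_shortest_path_def is_path_def is_walk_def by (metis append_butlast_last_id)
  let ?W = "B @ y # ys"
  have "is_walk V E ?W"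
    using S assms is_walk_append_overlap[of V E B y ys] S_eq
    unfolding is_shortest_path_def is_path_def by simp
  moreover have "hd ?W = v"
    using S S_eq unfolding is_shortest_path_def is_path_def by (cases B) auto
  ultimately have "dist V E c v (last (y # ys)) \<le> ereal (walk_weight c ?W)"
    using dist_le_walk_weight by fastforce
  also have "\<dots> = ereal (walk_weight c S) + ereal (walk_weight c (y # ys))"
    using S_eq walk_weight_append_overlap[of c B y ys] by simp
  also have "\<dots> = dist V E c v y + ereal (walk_weight c (y # ys))"
    using S unfolding is_shortest_path_def by simp
  finally show ?thesis .
qed

lemma dist_self:
  assumes "v \<in> V"
  shows "dist V E c v v = 0"
proof -
  have "reachable V E v v"
    unfolding reachable_def using assms by (intro exI[of _ "[v]"]) simp
  then obtain S where S: "is_shortest_path V E c v v S"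
    using exists_shortest_path by blast
  then have "S = [v]"
    unfolding is_shortest_path_def is_path_def is_walk_def
    by (cases S) (auto dest: last_in_set split: if_splits)
  then show ?thesis
    using S unfolding is_shortest_path_def by (simp add: zero_ereal_def)
qed

text \<open>Without the reachability condition, an edge between two unreachable vertices would be
  tight, both distances being \<open>\<infinity>\<close>.\<close>

definition tight_edges :: "'a \<Rightarrow> ('a \<times> 'a) set" where
  "tight_edges v = {(x, y) \<in> E. reachable V E v x \<and>
     dist V E c v y = dist V E c v x + ereal (c (x, y))}"

lemma tight_edges_subset: "tight_edges v \<subseteq> E"
  unfolding tight_edges_def by auto

lemma tight_walk_dist:
  "is_walk V (tight_edges v) xs \<Longrightarrow>
     dist V E c v (last xs) = dist V E c v (hd xs) + ereal (walk_weight c xs)"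
proof (induction xs rule: induct_list012)
  case (3 x y zs)
  then show ?case
    by (simp add: tight_edges_def add.assoc)
qed (simp_all add: is_walk_def zero_ereal_def)

lemma tight_walk_distinct:
  assumes "is_walk V (tight_edges v) xs"
  shows "distinct xs"
proof (rule ccontr)
  assume "\<not> distinct xs"
  then obtain as z ms cs where "xs = as @ z # ms @ z # cs"
    using not_distinct_decomp by fastforce
  then have loop: "is_walk V (tight_edges v) (z # ms @ [z])"
    using is_walk_remove_loop(2)[of V "tight_edges v" as z ms cs] assms by simp
  obtain y ys where "ms @ [z] = y # ys"
    by (cases "ms @ [z]") auto
  then have "reachable V E v z"
    using loop unfolding tight_edges_def by auto
  then obtain d where d: "dist V E c v z = ereal d"
    using exists_shortest_path unfolding is_shortest_path_def by metis
  have "walk_weight c (z # ms @ [z]) > 0"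
    using closed_walk_weight_pos is_walk_mono[OF loop order_refl tight_edges_subset] by simp
  moreover have "dist V E c v z = dist V E c v z + ereal (walk_weight c (z # ms @ [z]))"
    using tight_walk_dist[OF loop] by simp
  ultimately show False
    using d by simp
qed

lemma shortest_walk_prefix:
  assumes "is_walk V E (xs @ y # ys)" "hd (xs @ [y]) = v"
    and "dist V E c v (last (y # ys)) = ereal (walk_weight c (xs @ y # ys))"
  shows "dist V E c v y = ereal (walk_weight c (xs @ [y]))"
proof (rule antisym)
  have walks: "is_walk V E (xs @ [y])" "is_walk V E (y # ys)"
    using assms(1) is_walk_append_overlap[of V E xs y ys] by simp_all
  show "dist V E c v y \<le> ereal (walk_weight c (xs @ [y]))"
    using dist_le_walk_weight[OF walks(1)] assms(2) by simp
  have "ereal (walk_weight c (xs @ [y])) + ereal (walk_weight c (y # ys))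
      \<le> dist V E c v y + ereal (walk_weight c (y # ys))"
    using dist_triangle_walk[OF walks(2), of v] assms(3) walk_weight_append_overlap[of c xs y ys]
    by simp
  then show "ereal (walk_weight c (xs @ [y])) \<le> dist V E c v y"
    by (cases "dist V E c v y") simp_all
qed

lemma shortest_walk_is_tight:
  assumes "is_walk V E xs" "hd xs = v" "dist V E c v (last xs) = ereal (walk_weight c xs)"
  shows "is_walk V (tight_edges v) xs"
  using assms
proof (induction xs rule: rev_induct)
  case Nil
  then show ?case by (simp add: is_walk_def)
next
  case (snoc y xs)
  show ?case
  proof (cases "xs = []")
    case True
    then show ?thesis using snoc.prems(1) by simp
  next
    case False
    then obtain ws x where xs: "xs = ws @ [x]"
      by (cases xs rule: rev_cases) auto
    have walk: "is_walk V E (ws @ x # [y])"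
      using snoc.prems(1) xs by simp
    have start: "hd (ws @ [x]) = v"
      using snoc.prems(2) xs by (cases ws) simp_all
    have shortest: "dist V E c v (last [x, y]) = ereal (walk_weight c (ws @ x # [y]))"
      using snoc.prems(3) xs by simp
    have prefix_walk: "is_walk V E (ws @ [x])" and edge_walk: "is_walk V E [x, y]"
      using walk is_walk_append_overlap[of V E ws x "[y]"] by simp_all
    have prefix: "dist V E c v x = ereal (walk_weight c (ws @ [x]))"
      using shortest_walk_prefix[OF walk start shortest] .
    have "is_walk V (tight_edges v) (ws @ [x])"
      using snoc.IH prefix_walk start prefix xs by simp
    moreover have "reachable V E v x"
      unfolding reachable_def using prefix_walk start by (intro exI[of _ "ws @ [x]"]) simp
    then have "(x, y) \<in> tight_edges v"
      using edge_walk shortest prefix walk_weight_append_overlap[of c ws x "[y]"]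
      unfolding tight_edges_def by simp
    then have "is_walk V (tight_edges v) [x, y]"
      using edge_walk by simp
    ultimately show ?thesis
      using xs is_walk_append_overlap[of V "tight_edges v" ws x "[y]"] by simp
  qed
qed

lemma shortest_path_iff_tight_walk:
  assumes "v \<in> V"
  shows "is_shortest_path V E c v w P \<longleftrightarrow> is_walk V (tight_edges v) P \<and> hd P = v \<and> last P = w"
proof
  assume "is_shortest_path V E c v w P"
  then show "is_walk V (tight_edges v) P \<and> hd P = v \<and> last P = w"
    using shortest_walk_is_tight unfolding is_shortest_path_def is_path_def by auto
next
  assume tight: "is_walk V (tight_edges v) P \<and> hd P = v \<and> last P = w"
  then have "is_path V E v w P"
    using tight_walk_distinct is_walk_mono[OF _ order_refl tight_edges_subset]
    unfolding is_path_def by blast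
  moreover have "dist V E c v w = ereal (walk_weight c P)"
    using tight tight_walk_dist[of v P] dist_self[OF assms] by simp
  ultimately show "is_shortest_path V E c v w P"
    unfolding is_shortest_path_def by simp
qed

lemma distance_critical_if_on_all_shortest_paths:
  assumes "reachable V E v w" and "\<And>P. is_shortest_path V E c v w P \<Longrightarrow> u \<in> set P"
  shows "distance_critical V E c v w u"
proof -
  obtain S where "is_shortest_path V E c v w S"
    using exists_shortest_path[OF assms(1)] ..
  then have dist_eq: "dist V E c v w = ereal (walk_weight c S)"
    by (simp add: is_shortest_path_def)
  have "is_cycle V E C" if "is_cycle (V - {u}) E C" for C
    using that is_walk_mono[of "V - {u}" E C V E] unfolding is_cycle_def by blast
  then interpret deleted: pos_cycle_graph "V - {u}" E c
    using finite_vertices cycle_weight_pos by unfold_locales simp_all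
  have "dist V E c v w < dist (V - {u}) E c v w"
  proof (cases "reachable (V - {u}) E v w")
    case False
    then show ?thesis
      using dist_eq dist_unreachable[OF False] by simp
  next
    case True
    then obtain S' where S': "is_shortest_path (V - {u}) E c v w S'"
      using deleted.exists_shortest_path by blast
    then have path: "is_path V E v w S'" and "u \<notin> set S'"
      unfolding is_shortest_path_def is_path_def is_walk_def by auto
    then have "dist V E c v w \<noteq> ereal (walk_weight c S')"
      using assms(2)[of S'] unfolding is_shortest_path_def by auto
    moreover have "dist V E c v w \<le> ereal (walk_weight c S')"
      using dist_le_walk_weight[of S'] path unfolding is_path_def by simp
    ultimately show ?thesis
      using S' unfolding is_shortest_path_def by simp
  qed
  then show ?thesis
    unfolding distance_critical_def by simp
qed

end

section \<open>Dominators in a rooted acyclic digraph\<close>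

locale rooted_dag =
  fixes V :: "'a set" and F :: "('a \<times> 'a) set" and r :: 'a
  assumes finite_vertices: "finite V"
    and edges_subset: "F \<subseteq> V \<times> V"
    and root_in_vertices: "r \<in> V"
    and walks_distinct: "\<And>xs. is_walk V F xs \<Longrightarrow> distinct xs"
begin

definition walks_to :: "'a \<Rightarrow> 'a list set" where
  "walks_to y = {P. is_walk V F P \<and> hd P = r \<and> last P = y}"

definition dominators :: "'a \<Rightarrow> 'a set" where
  "dominators y = {z. \<forall>P \<in> walks_to y. z \<in> set P}"

definition height :: "'a \<Rightarrow> nat" where
  "height y = Max (length ` walks_to y)"

definition parents :: "'a \<Rightarrow> 'a set" where
  "parents y = {p. walks_to p \<noteq> {} \<and> (p, y) \<in> F}"

lemma walks_to_not_Nil: "P \<in> walks_to y \<Longrightarrow> P \<noteq> []"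
  by (simp add: walks_to_def is_walk_def)

lemma finite_walks_to: "finite (walks_to y)"
proof (rule finite_subset[OF _ finite_subset_distinct[OF finite_vertices]])
  show "walks_to y \<subseteq> {xs. set xs \<subseteq> V \<and> distinct xs}"
    using walks_distinct by (auto simp: walks_to_def is_walk_iff_successively)
qed

lemma length_le_height: "P \<in> walks_to y \<Longrightarrow> length P \<le> height y"
  unfolding height_def by (intro Max_ge finite_imageI finite_walks_to imageI)

lemma height_attained:
  assumes "walks_to y \<noteq> {}"
  obtains P where "P \<in> walks_to y" "length P = height y"
proof -
  have "height y \<in> length ` walks_to y"
    unfolding height_def using assms by (intro Max_in finite_imageI finite_walks_to) simp
  then show ?thesis
    by (metis imageE that)
qed

lemma root_dominates: "r \<in> dominators y"
  unfolding dominators_def walks_to_def is_walk_def by (auto intro: hd_in_set)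

lemma dominates_self: "y \<in> dominators y"
  unfolding dominators_def walks_to_def is_walk_def by (auto intro: last_in_set)

lemma root_walk: "[r] \<in> walks_to r"
  unfolding walks_to_def using root_in_vertices by simp

lemma take_walks_to:
  assumes "P \<in> walks_to y" "i < length P"
  shows "take (Suc i) P \<in> walks_to (P ! i)"
proof -
  have "is_walk V F (take (Suc i) P)"
    using assms is_walk_take_drop(1) unfolding walks_to_def by blast
  moreover have "hd (take (Suc i) P) = r"
    using assms(1) unfolding walks_to_def by (simp add: hd_take)
  moreover have "last (take (Suc i) P) = P ! i"
    using assms(2) by (simp add: take_Suc_conv_app_nth)
  ultimately show ?thesis
    unfolding walks_to_def by simp
qed

lemma splice_walks_to:
  assumes W: "W \<in> walks_to (P ! i)" and P: "P \<in> walks_to y" and i: "i < length P"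
  shows "W @ drop (Suc i) P \<in> walks_to y"
proof -
  define B where "B = butlast W"
  have B: "W = B @ [P ! i]"
    using W walks_to_not_Nil[OF W] append_butlast_last_id[of W]
    unfolding B_def walks_to_def by simp
  have drop_eq: "P ! i # drop (Suc i) P = drop i P"
    using i by (rule Cons_nth_drop_Suc)
  have "is_walk V F (P ! i # drop (Suc i) P)"
    using is_walk_take_drop(2)[of V F P i] P i unfolding drop_eq walks_to_def by simp
  then have "is_walk V F (B @ P ! i # drop (Suc i) P)"
    using W B is_walk_append_overlap[of V F B "P ! i" "drop (Suc i) P"]
    unfolding walks_to_def by simp
  moreover have "hd (B @ P ! i # drop (Suc i) P) = r"
    using W B unfolding walks_to_def by (cases B) simp_all
  moreover have "last (P ! i # drop (Suc i) P) = y"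
    using P i unfolding drop_eq walks_to_def by (simp add: last_drop)
  ultimately show ?thesis
    unfolding walks_to_def B by simp
qed

lemma walks_to_ne_if_on_walk:
  assumes "P \<in> walks_to y" "z \<in> set P"
  shows "walks_to z \<noteq> {}"
proof -
  obtain i where "i < length P" "z = P ! i"
    using assms(2) by (auto simp: in_set_conv_nth)
  then show ?thesis
    using take_walks_to[OF assms(1)] by blast
qed

lemma height_less_on_walk:
  assumes P: "P \<in> walks_to y" and z: "z \<in> set P" "z \<noteq> y"
  shows "height z < height y"
proof -
  obtain i where i: "i < length P" "z = P ! i"
    using z(1) by (auto simp: in_set_conv_nth)
  have "P ! (length P - 1) = y"
    using P walks_to_not_Nil[OF P] unfolding walks_to_def by (simp add: last_conv_nth)
  then have "i \<noteq> length P - 1"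
    using i z(2) by auto
  then have "Suc i < length P"
    using i(1) by linarith
  obtain W where W: "W \<in> walks_to z" "length W = height z"
    using height_attained walks_to_ne_if_on_walk[OF P z(1)] by blast
  have "length (W @ drop (Suc i) P) \<le> height y"
    using splice_walks_to[of W P i] W(1) P i(1) i(2)[symmetric] by (intro length_le_height) simp
  then show ?thesis
    using W(2) \<open>Suc i < length P\<close> by simp
qed

lemma dominators_trans:
  assumes "z \<in> dominators y" "t \<in> dominators z"
  shows "t \<in> dominators y"
  unfolding dominators_def
proof (intro CollectI ballI)
  fix P assume P: "P \<in> walks_to y"
  then obtain i where i: "i < length P" "z = P ! i"
    using assms(1) unfolding dominators_def by (auto simp: in_set_conv_nth)
  then have "t \<in> set (take (Suc i) P)"
    using assms(2) take_walks_to[OF P i(1)] unfolding dominators_def by simp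
  then show "t \<in> set P"
    by (rule in_set_takeD)
qed

lemma dominators_linear:
  assumes "walks_to y \<noteq> {}" "z1 \<in> dominators y" "z2 \<in> dominators y"
  shows "z1 \<in> dominators z2 \<or> z2 \<in> dominators z1"
proof -
  obtain P where P: "P \<in> walks_to y"
    using assms(1) by blast
  have earlier_dominates_later: "P ! i \<in> dominators (P ! j)"
    if ij: "i \<le> j" "j < length P" and dom: "P ! i \<in> dominators y" for i j
    unfolding dominators_def
  proof (intro CollectI ballI)
    fix R assume "R \<in> walks_to (P ! j)"
    then have "P ! i \<in> set (R @ drop (Suc j) P)"
      using splice_walks_to[OF _ P ij(2)] dom unfolding dominators_def by blast
    moreover have "P ! i \<notin> set (drop (Suc j) P)"
    proof -
      have "distinct (take (Suc j) P @ drop (Suc j) P)"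
        using walks_distinct P unfolding walks_to_def by simp
      moreover have "i < length (take (Suc j) P)"
        using ij by simp
      then have "take (Suc j) P ! i \<in> set (take (Suc j) P)"
        by (rule nth_mem)
      then have "P ! i \<in> set (take (Suc j) P)"
        using ij by simp
      ultimately show ?thesis
        by (auto simp del: append_take_drop_id)
    qed
    ultimately show "P ! i \<in> set R"
      by simp
  qed
  obtain i where i: "i < length P" "z1 = P ! i"
    using assms(2) P unfolding dominators_def by (auto simp: in_set_conv_nth)
  obtain j where j: "j < length P" "z2 = P ! j"
    using assms(3) P unfolding dominators_def by (auto simp: in_set_conv_nth)
  show ?thesis
  proof (cases "i \<le> j")
    case True
    then show ?thesis using earlier_dominates_later[OF True j(1)] assms(2) i j by simp
  next
    case False
    then show ?thesis using earlier_dominates_later[of j i] assms(3) i j by simp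
  qed
qed

lemma walk_to_parent:
  assumes P: "P \<in> walks_to y" and y: "y \<noteq> r"
  obtains p where "p \<in> parents y" "butlast P \<in> walks_to p"
proof -
  define B where "B = butlast P"
  have P_eq: "P = B @ [y]"
    using P walks_to_not_Nil[OF P] append_butlast_last_id[of P]
    unfolding B_def walks_to_def by simp
  have "B \<noteq> []"
    using P y unfolding P_eq walks_to_def by auto
  then have "is_walk V F B" "(last B, y) \<in> F" "hd B = r"
    using P is_walk_append[of B "[y]" V F] unfolding P_eq walks_to_def by simp_all
  then have "B \<in> walks_to (last B)" "last B \<in> parents y"
    unfolding parents_def walks_to_def by auto
  then show ?thesis
    using that unfolding B_def by blast
qed

lemma parents_nonempty: "walks_to y \<noteq> {} \<Longrightarrow> y \<noteq> r \<Longrightarrow> parents y \<noteq> {}"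
  using walk_to_parent by (metis all_not_in_conv)

lemma dominator_if_dominates_parents:
  assumes "y \<noteq> r" and "\<And>p. p \<in> parents y \<Longrightarrow> z \<in> dominators p"
  shows "z \<in> dominators y"
  unfolding dominators_def
proof (intro CollectI ballI)
  fix P assume "P \<in> walks_to y"
  then obtain p where "p \<in> parents y" "butlast P \<in> walks_to p"
    using assms(1) by (rule walk_to_parent)
  then have "z \<in> set (butlast P)"
    using assms(2) unfolding dominators_def by blast
  then show "z \<in> set P"
    by (rule in_set_butlastD)
qed

lemma snoc_walks_to:
  assumes "Q \<in> walks_to p" "(p, y) \<in> F"
  shows "Q @ [y] \<in> walks_to y"
proof -
  have "Q \<noteq> []" "y \<in> V"
    using walks_to_not_Nil[OF assms(1)] assms(2) edges_subset by auto
  then show ?thesis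
    using assms is_walk_append[of Q "[y]" V F] unfolding walks_to_def by simp
qed

lemma height_parent_less:
  assumes "p \<in> parents y"
  shows "height p < height y"
proof -
  obtain W where W: "W \<in> walks_to p" "length W = height p"
    using assms height_attained unfolding parents_def by blast
  then have "length (W @ [y]) \<le> height y"
    using assms snoc_walks_to length_le_height unfolding parents_def by blast
  then show ?thesis
    using W(2) by simp
qed

lemma walks_to_ne_if_dominator:
  assumes "walks_to y \<noteq> {}" "z \<in> dominators y"
  shows "walks_to z \<noteq> {}"
  using assms walks_to_ne_if_on_walk unfolding dominators_def by blast

lemma height_less_dominator:
  assumes "walks_to y \<noteq> {}" "z \<in> dominators y" "z \<noteq> y"
  shows "height z < height y"
  using assms height_less_on_walk unfolding dominators_def by blast

text \<open>Choose \<open>z0\<close> of least height among the dominators of \<open>a\<close> that fail to dominate some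
  parent of \<open>b\<close>, and a parent \<open>p\<close> not dominated by \<open>z0\<close>. As the dominators of \<open>a\<close> form a
  chain, any other such dominator of both \<open>a\<close> and \<open>p\<close> would either dominate \<open>z0\<close> and be
  lower, or be dominated by \<open>z0\<close>, so that \<open>z0\<close> would dominate \<open>p\<close>.\<close>

lemma exists_parent_sharing_dominators:
  assumes a: "walks_to a \<noteq> {}" and b: "parents b \<noteq> {}"
  shows "\<exists>p \<in> parents b. dominators a \<inter> dominators p \<subseteq> (\<Inter>q \<in> parents b. dominators q)"
proof (cases "dominators a \<subseteq> (\<Inter>q \<in> parents b. dominators q)")
  case True
  then show ?thesis using b by blast
next
  case False
  let ?Z = "dominators a - (\<Inter>q \<in> parents b. dominators q)"
  obtain z0 where z0: "z0 \<in> ?Z" "\<And>z. z \<in> ?Z \<Longrightarrow> height z0 \<le> height z"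
    using False ex_has_least_nat[of "\<lambda>z. z \<in> ?Z" _ height] by blast
  then obtain p where p: "p \<in> parents b" "z0 \<notin> dominators p"
    by blast
  have "z \<in> (\<Inter>q \<in> parents b. dominators q)" if z: "z \<in> dominators a" "z \<in> dominators p" for z
  proof (rule ccontr)
    assume "z \<notin> (\<Inter>q \<in> parents b. dominators q)"
    then have "z \<in> ?Z"
      using z by blast
    consider "z0 \<in> dominators z" | "z \<in> dominators z0"
      using dominators_linear[OF a] z(1) z0(1) by blast
    then show False
    proof cases
      case 1
      then show False
        using dominators_trans[OF z(2)] p(2) by blast
    next
      case 2
      have "z \<noteq> z0"
        using z(2) p(2) by blast
      then have "height z < height z0"
        using height_less_dominator[OF walks_to_ne_if_dominator[OF a] 2] z0(1) by blast
      then show False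
        using z0(2)[OF \<open>z \<in> ?Z\<close>] by simp
    qed
  qed
  then show ?thesis
    using p(1) by blast
qed

lemma extend_walk_pair:
  assumes heights: "height a \<le> height b" and a: "walks_to a \<noteq> {}" and b: "walks_to b \<noteq> {}"
    and parent_pairs: "\<And>p. p \<in> parents b \<Longrightarrow>
      \<exists>P \<in> walks_to a. \<exists>Q \<in> walks_to p. set P \<inter> set Q \<subseteq> dominators a \<inter> dominators p"
  shows "\<exists>P \<in> walks_to a. \<exists>Q \<in> walks_to b. set P \<inter> set Q \<subseteq> dominators a \<inter> dominators b"
proof (cases "b = r")
  case True
  obtain P where "P \<in> walks_to a"
    using a by blast
  moreover have "set P \<inter> set [r] \<subseteq> dominators a \<inter> dominators b"
    using root_dominates by auto
  ultimately show ?thesis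
    using root_walk True by blast
next
  case False
  obtain p where p: "p \<in> parents b"
    and shared: "dominators a \<inter> dominators p \<subseteq> (\<Inter>q \<in> parents b. dominators q)"
    using exists_parent_sharing_dominators[OF a parents_nonempty[OF b False]] by blast
  obtain P Q where P: "P \<in> walks_to a" and Q: "Q \<in> walks_to p"
    and PQ: "set P \<inter> set Q \<subseteq> dominators a \<inter> dominators p"
    using parent_pairs[OF p] by blast
  have "set P \<inter> set (Q @ [b]) \<subseteq> dominators a \<inter> dominators b"
  proof
    fix z assume z: "z \<in> set P \<inter> set (Q @ [b])"
    show "z \<in> dominators a \<inter> dominators b"
    proof (cases "z = b")
      case True
      then have "b = a"
        using height_less_on_walk[OF P] heights z by fastforce
      then show ?thesis
        using True dominates_self by simp
    next
      case False
      then have "z \<in> dominators a" "\<And>q. q \<in> parents b \<Longrightarrow> z \<in> dominators q"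
        using z PQ shared by auto
      then show ?thesis
        using dominator_if_dominates_parents[OF \<open>b \<noteq> r\<close>] by blast
    qed
  qed
  moreover have "Q @ [b] \<in> walks_to b"
    using snoc_walks_to Q p unfolding parents_def by blast
  ultimately show ?thesis
    using P by blast
qed

lemma walks_meeting_in_common_dominators:
  assumes "walks_to a \<noteq> {}" "walks_to b \<noteq> {}"
  shows "\<exists>P \<in> walks_to a. \<exists>Q \<in> walks_to b. set P \<inter> set Q \<subseteq> dominators a \<inter> dominators b"
  using assms
proof (induction "height a + height b" arbitrary: a b rule: less_induct)
  case less
  show ?case
  proof (cases "height a \<le> height b")
    case True
    have "\<exists>P \<in> walks_to a. \<exists>Q \<in> walks_to p. set P \<inter> set Q \<subseteq> dominators a \<inter> dominators p"
      if "p \<in> parents b" for p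
      using less.hyps[of a p] less.prems(1) height_parent_less[OF that] that
      unfolding parents_def by simp
    then show ?thesis
      using extend_walk_pair[OF True less.prems] by blast
  next
    case False
    have "\<exists>P \<in> walks_to b. \<exists>Q \<in> walks_to p. set P \<inter> set Q \<subseteq> dominators b \<inter> dominators p"
      if "p \<in> parents a" for p
      using less.hyps[of b p] less.prems(2) height_parent_less[OF that] that
      unfolding parents_def by simp
    then have "\<exists>Q \<in> walks_to b. \<exists>P \<in> walks_to a. set Q \<inter> set P \<subseteq> dominators b \<inter> dominators a"
      using extend_walk_pair[of b a] False less.prems by simp
    then show ?thesis
      by blast
  qed
qed

end

theorem mainTheorem7:
  fixes V :: "'a set" and E :: "('a \<times> 'a) set" and c :: "'a \<times> 'a \<Rightarrow> real"
    and v w :: 'a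
  assumes "finite V"
    and "E \<subseteq> V \<times> V"
    and "\<And>C. is_cycle V E C \<Longrightarrow> walk_weight c C > 0"
    and "v \<in> V" and "w \<in> V"
    and "reachable V E v w"
  shows "\<exists>P Q. is_shortest_path V E c v w P \<and> is_shortest_path V E c v w Q \<and>
           (\<forall>u \<in> set P \<inter> set Q. distance_critical V E c v w u)"
proof -
  interpret G: pos_cycle_graph V E c
    using assms(1,3) by unfold_locales
  interpret D: rooted_dag V "G.tight_edges v" v
    using assms(1,2,4) G.tight_edges_subset G.tight_walk_distinct by unfold_locales auto
  have shortest_iff: "is_shortest_path V E c v w P \<longleftrightarrow> P \<in> D.walks_to w" for P
    using G.shortest_path_iff_tight_walk[OF assms(4)] unfolding D.walks_to_def by simp
  obtain S where "is_shortest_path V E c v w S"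
    using G.exists_shortest_path[OF assms(6)] by blast
  then have "D.walks_to w \<noteq> {}"
    using shortest_iff by blast
  then obtain P Q where "P \<in> D.walks_to w" "Q \<in> D.walks_to w" "set P \<inter> set Q \<subseteq> D.dominators w"
    using D.walks_meeting_in_common_dominators by blast
  moreover have "distance_critical V E c v w u" if "u \<in> D.dominators w" for u
    using G.distance_critical_if_on_all_shortest_paths[OF assms(6)] that shortest_iff
    unfolding D.dominators_def by blast
  ultimately show ?thesis
    using shortest_iff by blast
qed

end
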